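(* Let $u$ be a drift function. The following are equivalent: (i) $\mathcal F^1_u$ and $\mathcal E^1_u$ coincide as sets with equivalent norms; (ii) there are $a\in[0,1)$ and $b\in\mathbb R$ with $Pu\le au+b$ on $\mathbf X$; (iii) $u\in\mathcal E^1_u$.
   Context: $(X_n)$ Markov chain on a complete separable metric space $\mathbf X$, $\mathbb P_x$ its law from $x$, $Pf(x)=\mathbb E_xf(X_1)$; $\tau$ a $\theta$-compatible stopping time ($\mathbb P_x(\tau=0)=0$ and $\mathbb P_x$-a.s. $\tau\ge2\Rightarrow\tau\circ\theta=\tau-1$, $\theta$ the shift) with $\mathbb E_x\tau<\infty$ for all $x$. $Qf(x)=\mathbb E_x[f(X_\tau)\mathbf 1_{\tau<\infty}]$. A drift function is a Borel $u:\mathbf X\to[1,\infty)$ such that $u-Pu$ is bounded below and $Qu$, $x\mapsto\mathbb E_x\tau/u(x)$ and $P(u-Pu+B_u)/(u-Pu+B_u)$ are bounded on $\mathbf X$, where $B_u=\sup_{\mathbf X}(Pu-u)+1$. For Borel $v:\mathbf X\to[1,\infty)$ and $p\ge1$, $\mathcal F^p_v$ is the Banach space of Borel $f$ with $\sup|f|^p/v<\infty$, with norm $\sup_x|f(x)|/v(x)^{1/p}$; $\mathcal E^p_u:=\mathcal F^p_{u-Pu+B_u}$. *)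

theory Defs
  imports "HOL-Probability.Probability" "HOL-Library.Extended_Nat"
begin

text \<open>Canonical path space: trajectories are streams, X n \<omega> = \<omega> !! n, the shift is stl.
  Px x is the law of the chain started at x, K is its transition kernel.\<close>

definition markov_law :: "('a::polish_space \<Rightarrow> 'a measure) \<Rightarrow> ('a \<Rightarrow> 'a stream measure) \<Rightarrow> bool" where
  "markov_law K Px \<longleftrightarrow>
     K \<in> borel \<rightarrow>\<^sub>M prob_algebra borel \<and>
     Px \<in> borel \<rightarrow>\<^sub>M prob_algebra (stream_space borel) \<and>
     (\<forall>x. Px x = K x \<bind> (\<lambda>y. distr (Px y) (stream_space borel) (\<lambda>\<omega>. x ## \<omega>)))"

text \<open>Stopping time for the natural filtration of the coordinate process (values in enat, \<infinity> allowed).\<close>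
definition stopping_time_nat :: "('a::polish_space stream \<Rightarrow> enat) \<Rightarrow> bool" where
  "stopping_time_nat \<tau> \<longleftrightarrow>
     \<tau> \<in> stream_space (borel :: 'a measure) \<rightarrow>\<^sub>M count_space UNIV \<and>
     (\<forall>n::nat. \<forall>\<omega> \<omega>'. stake (Suc n) \<omega> = stake (Suc n) \<omega>' \<longrightarrow> (\<tau> \<omega> = enat n \<longleftrightarrow> \<tau> \<omega>' = enat n))"

definition theta_compatible :: "('a \<Rightarrow> 'a stream measure) \<Rightarrow> ('a stream \<Rightarrow> enat) \<Rightarrow> bool" where
  "theta_compatible Px \<tau> \<longleftrightarrow>
     (\<forall>x. emeasure (Px x) {\<omega> \<in> space (Px x). \<tau> \<omega> = 0} = 0) \<and>
     (\<forall>x. AE \<omega> in Px x. \<tau> \<omega> \<ge> 2 \<longrightarrow> \<tau> (stl \<omega>) = \<tau> \<omega> - 1)"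

definition Pn :: "('a \<Rightarrow> 'a stream measure) \<Rightarrow> ('a \<Rightarrow> real) \<Rightarrow> 'a \<Rightarrow> ennreal" where
  "Pn Px f x = (\<integral>\<^sup>+ \<omega>. ennreal (f (\<omega> !! 1)) \<partial>Px x)"

text \<open>Real-valued P f (used only where P f is finite).\<close>
definition Pr :: "('a \<Rightarrow> 'a stream measure) \<Rightarrow> ('a \<Rightarrow> real) \<Rightarrow> 'a \<Rightarrow> real" where
  "Pr Px f x = enn2real (Pn Px f x)"

definition Qn :: "('a \<Rightarrow> 'a stream measure) \<Rightarrow> ('a stream \<Rightarrow> enat) \<Rightarrow> ('a \<Rightarrow> real) \<Rightarrow> 'a \<Rightarrow> ennreal" where
  "Qn Px \<tau> f x = (\<integral>\<^sup>+ \<omega>. (if \<tau> \<omega> < \<infinity> then ennreal (f (\<omega> !! the_enat (\<tau> \<omega>))) else 0) \<partial>Px x)"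

definition exp_tau :: "('a \<Rightarrow> 'a stream measure) \<Rightarrow> ('a stream \<Rightarrow> enat) \<Rightarrow> 'a \<Rightarrow> ennreal" where
  "exp_tau Px \<tau> x = (\<integral>\<^sup>+ \<omega>. ennreal_of_enat (\<tau> \<omega>) \<partial>Px x)"

definition B_u :: "('a \<Rightarrow> 'a stream measure) \<Rightarrow> ('a \<Rightarrow> real) \<Rightarrow> real" where
  "B_u Px u = (SUP x. Pr Px u x - u x) + 1"

definition E_weight :: "('a \<Rightarrow> 'a stream measure) \<Rightarrow> ('a \<Rightarrow> real) \<Rightarrow> 'a \<Rightarrow> real" where
  "E_weight Px u x = u x - Pr Px u x + B_u Px u"

definition drift_function :: "('a::polish_space \<Rightarrow> 'a stream measure) \<Rightarrow> ('a stream \<Rightarrow> enat) \<Rightarrow> ('a \<Rightarrow> real) \<Rightarrow> bool" where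
  "drift_function Px \<tau> u \<longleftrightarrow>
     u \<in> borel_measurable borel \<and> (\<forall>x. 1 \<le> u x) \<and>
     \<comment> \<open>u - Pu bounded below (in particular Pu is finite)\<close>
     (\<exists>c. \<forall>x. Pn Px u x \<le> ennreal (u x + c)) \<and>
     \<comment> \<open>Qu bounded\<close>
     (\<exists>c. \<forall>x. Qn Px \<tau> u x \<le> ennreal c) \<and>
     \<comment> \<open>E_x tau / u(x) bounded\<close>
     (\<exists>c. \<forall>x. exp_tau Px \<tau> x \<le> ennreal (c * u x)) \<and>
     \<comment> \<open>P(u - Pu + B_u) / (u - Pu + B_u) bounded\<close>
     (\<exists>c. \<forall>x. Pn Px (E_weight Px u) x \<le> ennreal (c * E_weight Px u x))"

definition Fspace :: "real \<Rightarrow> ('a::topological_space \<Rightarrow> real) \<Rightarrow> ('a \<Rightarrow> real) set" where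
  "Fspace p v = {f. f \<in> borel_measurable borel \<and> bdd_above (range (\<lambda>x. \<bar>f x\<bar> powr p / v x))}"

definition Fnorm :: "real \<Rightarrow> ('a \<Rightarrow> real) \<Rightarrow> ('a \<Rightarrow> real) \<Rightarrow> real" where
  "Fnorm p v f = (SUP x. \<bar>f x\<bar> / v x powr (1 / p))"

end

theory Submission
  imports Defs
begin

text \<open>Writing \<open>w = u - Pu + B\<^sub>u\<close>, one always has \<open>1 \<le> w \<le> (1 + \<bar>B\<^sub>u\<bar>) u\<close>, so
  \<open>\<F>\<^sup>1\<^sub>w \<subseteq> \<F>\<^sup>1\<^sub>u\<close> with a norm bound. The reverse comparison \<open>u \<le> C w\<close> is exactly
  \<open>u \<in> \<F>\<^sup>1\<^sub>w\<close>, and rearranging \<open>u \<le> C (u - Pu + B\<^sub>u)\<close> gives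
  \<open>Pu \<le> (1 - 1/C) u + B\<^sub>u\<close>; conversely \<open>Pu \<le> a u + b\<close> gives \<open>(1 - a) u \<le> w + (b - B\<^sub>u)\<close>,
  which is bounded by a multiple of \<open>w\<close> because \<open>w \<ge> 1\<close>.\<close>

lemma Fspace_1: "Fspace 1 v = {f. f \<in> borel_measurable borel \<and> bdd_above (range (\<lambda>x. \<bar>f x\<bar> / v x))}"
  by (simp add: Fspace_def)

lemma Fnorm_1: "(\<And>x. 0 < v x) \<Longrightarrow> Fnorm 1 v f = (SUP x. \<bar>f x\<bar> / v x)"
  unfolding Fnorm_def by (simp add: abs_of_pos)

lemma weight_in_Fspace_1:
  assumes "v \<in> borel_measurable borel" and "\<And>x. 0 < v x"
  shows "v \<in> Fspace 1 v"
proof -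
  have "\<bar>v x\<bar> / v x \<le> 1" for x using assms(2)[of x] by simp
  then have "bdd_above (range (\<lambda>x. \<bar>v x\<bar> / v x))" by (rule bdd_aboveI2)
  then show ?thesis unfolding Fspace_1 using assms(1) by blast
qed

lemma Fspace_1_antimono_weight:
  fixes v v' f :: "'a::topological_space \<Rightarrow> real"
  assumes pos: "\<And>x. 0 < v' x" and "0 < C" and le: "\<And>x. v' x \<le> C * v x"
    and f: "f \<in> Fspace 1 v'"
  shows "f \<in> Fspace 1 v" and "Fnorm 1 v f \<le> C * Fnorm 1 v' f"
proof -
  have vpos: "0 < v x" for x
    using pos[of x] le[of x] \<open>0 < C\<close> by (metis less_le_trans zero_less_mult_pos)
  have bdd: "bdd_above (range (\<lambda>x. \<bar>f x\<bar> / v' x))" and meas: "f \<in> borel_measurable borel"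
    using f by (auto simp: Fspace_1)
  have bound: "\<bar>f x\<bar> / v x \<le> C * (SUP x. \<bar>f x\<bar> / v' x)" for x
  proof -
    have "\<bar>f x\<bar> * v' x \<le> \<bar>f x\<bar> * (C * v x)" using le[of x] by (simp add: mult_left_mono)
    then have "\<bar>f x\<bar> / v x \<le> C * (\<bar>f x\<bar> / v' x)"
      using vpos[of x] pos[of x] by (simp add: field_simps)
    also have "\<dots> \<le> C * (SUP x. \<bar>f x\<bar> / v' x)"
      using \<open>0 < C\<close> by (intro mult_left_mono cSUP_upper[OF _ bdd]) auto
    finally show ?thesis .
  qed
  have "bdd_above (range (\<lambda>x. \<bar>f x\<bar> / v x))" using bound by (rule bdd_aboveI2)
  then show "f \<in> Fspace 1 v" unfolding Fspace_1 using meas by blast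
  show "Fnorm 1 v f \<le> C * Fnorm 1 v' f"
    using vpos pos bound by (simp add: Fnorm_1 cSUP_least)
qed

lemma Fspace_1_weight_iff_dominated:
  assumes "u \<in> borel_measurable borel" and upos: "\<And>x. 0 < u x" and wpos: "\<And>x. 0 < w x"
  shows "u \<in> Fspace 1 w \<longleftrightarrow> (\<exists>C>0. \<forall>x. u x \<le> C * w x)"
proof
  assume "u \<in> Fspace 1 w"
  then obtain C where C: "\<And>x. u x / w x \<le> C"
    using upos by (auto simp: Fspace_1 bdd_above_def abs_of_pos)
  have "u x \<le> max C 1 * w x" for x
    using C[of x] wpos[of x] by (smt (verit) mult_right_mono pos_divide_le_eq)
  then show "\<exists>C>0. \<forall>x. u x \<le> C * w x" by (meson less_max_iff_disj zero_less_one)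
next
  assume "\<exists>C>0. \<forall>x. u x \<le> C * w x"
  then obtain C where "0 < C" "\<And>x. u x \<le> C * w x" by blast
  then show "u \<in> Fspace 1 w"
    using Fspace_1_antimono_weight(1) weight_in_Fspace_1 assms by metis
qed

lemma drift_Pr_minus_bdd_above:
  assumes "drift_function Px \<tau> u"
  shows "bdd_above (range (\<lambda>x. Pr Px u x - u x))"
proof -
  obtain c where c: "\<And>x. Pn Px u x \<le> ennreal (u x + c)"
    using assms unfolding drift_function_def by blast
  have u1: "\<And>x. 1 \<le> u x" using assms by (simp add: drift_function_def)
  have "Pr Px u x - u x \<le> max 0 c" for x
  proof (cases "0 \<le> u x + c")
    case True
    then have "Pr Px u x \<le> u x + c"
      unfolding Pr_def using c[of x] by (metis enn2real_ennreal enn2real_mono ennreal_less_top)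
    then show ?thesis by simp
  next
    case False
    then have "Pn Px u x = 0" using c[of x] by (simp add: ennreal_neg)
    then show ?thesis using u1[of x] by (simp add: Pr_def)
  qed
  then show ?thesis by (rule bdd_aboveI2)
qed

lemma E_weight_ge_1:
  assumes "drift_function Px \<tau> u"
  shows "1 \<le> E_weight Px u x"
  using cSUP_upper[OF _ drift_Pr_minus_bdd_above[OF assms], of x]
  by (simp add: E_weight_def B_u_def)

lemma E_weight_le_u:
  assumes "drift_function Px \<tau> u"
  shows "E_weight Px u x \<le> (1 + \<bar>B_u Px u\<bar>) * u x"
proof -
  have u1: "1 \<le> u x" using assms by (simp add: drift_function_def)
  have "0 \<le> Pr Px u x" by (simp add: Pr_def)
  then have "E_weight Px u x \<le> u x + \<bar>B_u Px u\<bar>" by (simp add: E_weight_def)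
  also have "\<dots> \<le> u x + \<bar>B_u Px u\<bar> * u x" using u1 mult_left_mono[OF u1, of "\<bar>B_u Px u\<bar>"] by simp
  finally show ?thesis by (simp add: algebra_simps)
qed

lemma drift_geometric_iff_u_dominated_by_E_weight:
  assumes "drift_function Px \<tau> u"
  shows "(\<exists>a b. 0 \<le> a \<and> a < 1 \<and> (\<forall>x. Pr Px u x \<le> a * u x + b))
     \<longleftrightarrow> (\<exists>C>0. \<forall>x. u x \<le> C * E_weight Px u x)"
proof
  assume "\<exists>a b. 0 \<le> a \<and> a < 1 \<and> (\<forall>x. Pr Px u x \<le> a * u x + b)"
  then obtain a b where ab: "0 \<le> a" "a < 1" "\<And>x. Pr Px u x \<le> a * u x + b" by blast
  define d where "d = \<bar>b - B_u Px u\<bar>"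
  have "u x \<le> (1 + d) / (1 - a) * E_weight Px u x" for x
  proof -
    have w1: "1 \<le> E_weight Px u x" using E_weight_ge_1[OF assms] .
    have "(1 - a) * u x \<le> E_weight Px u x + (b - B_u Px u)"
      using ab(3)[of x] by (simp add: E_weight_def algebra_simps)
    also have "\<dots> \<le> E_weight Px u x + d * E_weight Px u x"
      using mult_left_mono[OF w1, of d] by (simp add: d_def)
    finally show ?thesis using ab by (simp add: field_simps)
  qed
  moreover have "0 < (1 + d) / (1 - a)" using ab by (simp add: d_def add_pos_nonneg)
  ultimately show "\<exists>C>0. \<forall>x. u x \<le> C * E_weight Px u x" by blast
next
  assume "\<exists>C>0. \<forall>x. u x \<le> C * E_weight Px u x"
  then obtain C where "0 < C" and C: "\<And>x. u x \<le> C * E_weight Px u x" by blast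
  define C' where "C' = max C 1"
  have C'1: "1 \<le> C'" by (simp add: C'_def)
  have "Pr Px u x \<le> (1 - 1 / C') * u x + B_u Px u" for x
  proof -
    have "u x \<le> C' * E_weight Px u x"
      using C[of x] E_weight_ge_1[OF assms, of x] unfolding C'_def
      by (smt (verit) max.cobounded1 mult_right_mono)
    then have "u x / C' \<le> E_weight Px u x" using C'1 by (simp add: divide_le_eq mult.commute)
    then show ?thesis by (simp add: E_weight_def algebra_simps)
  qed
  moreover have "0 \<le> 1 - 1 / C'" "1 - 1 / C' < 1" using C'1 by auto
  ultimately show "\<exists>a b. 0 \<le> a \<and> a < 1 \<and> (\<forall>x. Pr Px u x \<le> a * u x + b)" by blast
qed

theorem mainTheorem11:
  fixes K :: "'a::polish_space \<Rightarrow> 'a measure"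
    and Px :: "'a \<Rightarrow> 'a stream measure"
    and \<tau> :: "'a stream \<Rightarrow> enat"
    and u :: "'a \<Rightarrow> real"
  assumes "markov_law K Px"
    and "stopping_time_nat \<tau>"
    and "theta_compatible Px \<tau>"
    and "\<forall>x. exp_tau Px \<tau> x < \<infinity>"
    and "drift_function Px \<tau> u"
  shows "((Fspace 1 u = Fspace 1 (E_weight Px u) \<and>
            (\<exists>c1>0. \<exists>c2>0. \<forall>f \<in> Fspace 1 u.
               Fnorm 1 (E_weight Px u) f \<le> c1 * Fnorm 1 u f \<and>
               Fnorm 1 u f \<le> c2 * Fnorm 1 (E_weight Px u) f))
          \<longleftrightarrow> (\<exists>a b. 0 \<le> a \<and> a < 1 \<and> (\<forall>x. Pr Px u x \<le> a * u x + b)))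
       \<and> ((\<exists>a b. 0 \<le> a \<and> a < 1 \<and> (\<forall>x. Pr Px u x \<le> a * u x + b))
          \<longleftrightarrow> u \<in> Fspace 1 (E_weight Px u))"
proof -
  let ?w = "E_weight Px u"
  have meas: "u \<in> borel_measurable borel" and upos: "\<And>x. 0 < u x"
    using assms(5) by (auto simp: drift_function_def intro: less_le_trans[OF zero_less_one])
  have wpos: "\<And>x. 0 < ?w x" using E_weight_ge_1[OF assms(5)] by (rule less_le_trans[OF zero_less_one])
  have C2: "0 < 1 + \<bar>B_u Px u\<bar>" by simp
  note w_to_u = Fspace_1_antimono_weight[where v = u and v' = ?w, OF wpos C2 E_weight_le_u[OF assms(5)]]
  have "(\<exists>a b. 0 \<le> a \<and> a < 1 \<and> (\<forall>x. Pr Px u x \<le> a * u x + b)) \<longleftrightarrow> u \<in> Fspace 1 ?w"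
    unfolding drift_geometric_iff_u_dominated_by_E_weight[OF assms(5)]
    by (rule Fspace_1_weight_iff_dominated[where w = ?w, OF meas upos wpos, symmetric])
  moreover have "u \<in> Fspace 1 ?w \<longleftrightarrow> Fspace 1 u = Fspace 1 ?w \<and>
      (\<exists>c1>0. \<exists>c2>0. \<forall>f \<in> Fspace 1 u. Fnorm 1 ?w f \<le> c1 * Fnorm 1 u f \<and> Fnorm 1 u f \<le> c2 * Fnorm 1 ?w f)"
  proof
    assume "u \<in> Fspace 1 ?w"
    then obtain C1 where "0 < C1" and u_le: "\<And>x. u x \<le> C1 * ?w x"
      using Fspace_1_weight_iff_dominated[where w = ?w, OF meas upos wpos] by blast
    note u_to_w = Fspace_1_antimono_weight[where v = ?w and v' = u, OF upos \<open>0 < C1\<close> u_le]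
    show "Fspace 1 u = Fspace 1 ?w \<and> (\<exists>c1>0. \<exists>c2>0. \<forall>f \<in> Fspace 1 u.
        Fnorm 1 ?w f \<le> c1 * Fnorm 1 u f \<and> Fnorm 1 u f \<le> c2 * Fnorm 1 ?w f)"
      using u_to_w w_to_u \<open>0 < C1\<close> C2 by blast
  qed (use weight_in_Fspace_1[OF meas upos] in blast)
  ultimately show ?thesis by blast
qed

end
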